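(* Let $p>2$ be a prime, $m\ge2$, and $c_1,\ldots,c_{2m}\in\mathbb{Z}_p$ with $c_i\not\equiv0\pmod p$. Let $G$ be the pro-$p$-group with generators $x_1,\ldots,x_{2m}$ and relations $$x_1^{pc_1}[x_1,x_2]=1,\ x_2^{pc_2}[x_2,x_3]=1,\ \ldots,\ x_{2m-1}^{pc_{2m-1}}[x_{2m-1},x_{2m}]=1,\ x_{2m}^{pc_{2m}}[x_{2m},x_1]=1,$$ i.e. $G=F/R$ with $F$ the free pro-$p$-group on $x_1,\dots,x_{2m}$ and $R$ the closed normal subgroup generated by the left-hand sides. Then for every $n<p$, every continuous homomorphism $G\to\mathrm{GL}_n^{(1)}(\mathbb{Z}_p)$ is trivial.
   Context: $\mathrm{GL}_n^{(1)}(\mathbb{Z}_p)=\{X\in\mathrm{GL}_n(\mathbb{Z}_p): X\equiv 1 \bmod p\}$; $[x,y]=x^{-1}y^{-1}xy$. *)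

theory Defs
  imports "HOL-Computational_Algebra.Primes"
begin

text \<open>p-adic integers are represented as coherent sequences of residues:
  a p-adic integer a is given by its residues a k \<in> {0..<p^k} modulo p^k,
  with a (k+1) mod p^k = a k (the inverse limit of Z/p^k).\<close>

definition padic :: "int \<Rightarrow> (nat \<Rightarrow> int) \<Rightarrow> bool" where
  "padic p a \<longleftrightarrow> (\<forall>k. 0 \<le> a k \<and> a k < p ^ k \<and> a (Suc k) mod p ^ k = a k)"

text \<open>A matrix over Z_p: X i j is the p-adic entry (i,j); entries outside n x n are 0.\<close>

type_synonym zpmat = "nat \<Rightarrow> nat \<Rightarrow> nat \<Rightarrow> int"

definition zpmat :: "int \<Rightarrow> nat \<Rightarrow> zpmat \<Rightarrow> bool" where
  "zpmat p n X \<longleftrightarrow> (\<forall>i j. (i < n \<and> j < n \<longrightarrow> padic p (X i j)) \<and>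
                        (\<not> (i < n \<and> j < n) \<longrightarrow> X i j = (\<lambda>k. 0)))"

definition mat_mul :: "int \<Rightarrow> nat \<Rightarrow> zpmat \<Rightarrow> zpmat \<Rightarrow> zpmat" where
  "mat_mul p n X Y = (\<lambda>i j k. if i < n \<and> j < n
      then (\<Sum>l<n. X i l k * Y l j k) mod p ^ k else 0)"

definition mat_one :: "int \<Rightarrow> nat \<Rightarrow> zpmat" where
  "mat_one p n = (\<lambda>i j k. if i = j \<and> i < n then 1 mod p ^ k else 0)"

definition mat_inv :: "int \<Rightarrow> nat \<Rightarrow> zpmat \<Rightarrow> zpmat" where
  "mat_inv p n X = (THE Y. zpmat p n Y \<and> mat_mul p n X Y = mat_one p n \<and> mat_mul p n Y X = mat_one p n)"

definition GL1 :: "int \<Rightarrow> nat \<Rightarrow> zpmat \<Rightarrow> bool" where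
  "GL1 p n X \<longleftrightarrow> zpmat p n X
     \<and> (\<exists>Y. zpmat p n Y \<and> mat_mul p n X Y = mat_one p n \<and> mat_mul p n Y X = mat_one p n)
     \<and> (\<forall>i j. X i j 1 = mat_one p n i j 1)"

primrec mat_pow :: "int \<Rightarrow> nat \<Rightarrow> zpmat \<Rightarrow> nat \<Rightarrow> zpmat" where
  "mat_pow p n X 0 = mat_one p n"
| "mat_pow p n X (Suc e) = mat_mul p n X (mat_pow p n X e)"

text \<open>Power with a p-adic exponent a (for X \<equiv> 1 mod p): the continuous extension
  X^a = lim X^(a_j); modulo p^k it equals X^(a k) modulo p^k.\<close>

definition mat_zpow :: "int \<Rightarrow> nat \<Rightarrow> zpmat \<Rightarrow> (nat \<Rightarrow> int) \<Rightarrow> zpmat" where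
  "mat_zpow p n X a = (\<lambda>i j k. mat_pow p n X (nat (a k)) i j k)"

definition padic_times_p :: "int \<Rightarrow> (nat \<Rightarrow> int) \<Rightarrow> (nat \<Rightarrow> int)" where
  "padic_times_p p c = (\<lambda>k. (p * c k) mod p ^ k)"

definition mat_comm :: "int \<Rightarrow> nat \<Rightarrow> zpmat \<Rightarrow> zpmat \<Rightarrow> zpmat" where
  "mat_comm p n X Y = mat_mul p n (mat_inv p n X)
      (mat_mul p n (mat_inv p n Y) (mat_mul p n X Y))"

end

theory Submission
  imports Defs "Jordan_Normal_Form.Determinant" "HOL-Number_Theory.Cong"
begin

text \<open>
  Reducing modulo p^k turns everything into integer matrices. Write X = 1 + p^a A with a \<ge> 1
  maximal and Y = 1 + p B for the next generator; modulo p^(a+2) the relation X^(pc) [X,Y] = 1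
  becomes BA - AB \<equiv> cA (mod p). For a = 1 this gives A_(i+1) A_i - A_i A_(i+1) \<equiv> c_i A_i
  cyclically. Such a relation makes every tr(A_i^k) vanish mod p; since n < p, the idempotent
  power of A_i has trace equal to its rank, so A_i is nilpotent mod p, and the nilpotent A_(i+1)
  annihilates A_i. Hence all generators are \<equiv> 1 mod p^2; from then on B \<equiv> 0, so cA \<equiv> 0 and
  a can be increased indefinitely.
\<close>

section \<open>Integer matrices modulo q\<close>

text \<open>An n \<times> n integer matrix is a function on indices; only entries below n matter.\<close>

type_synonym imat = "nat \<Rightarrow> nat \<Rightarrow> int"

definition imat_mult :: "nat \<Rightarrow> imat \<Rightarrow> imat \<Rightarrow> imat" where
  "imat_mult n A B = (\<lambda>i j. \<Sum>l<n. A i l * B l j)"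

definition imat_one :: imat where
  "imat_one = (\<lambda>i j. if i = j then 1 else 0)"

definition imat_zero :: imat where
  "imat_zero = (\<lambda>i j. 0)"

definition imat_cong :: "nat \<Rightarrow> int \<Rightarrow> imat \<Rightarrow> imat \<Rightarrow> bool" where
  "imat_cong n q A B \<longleftrightarrow> (\<forall>i<n. \<forall>j<n. [A i j = B i j] (mod q))"

primrec imat_pow :: "nat \<Rightarrow> imat \<Rightarrow> nat \<Rightarrow> imat" where
  "imat_pow n A 0 = imat_one"
| "imat_pow n A (Suc e) = imat_mult n A (imat_pow n A e)"

definition imat_trace :: "nat \<Rightarrow> imat \<Rightarrow> int" where
  "imat_trace n A = (\<Sum>i<n. A i i)"

abbreviation imat_add :: "imat \<Rightarrow> imat \<Rightarrow> imat" where
  "imat_add A B \<equiv> (\<lambda>i j. A i j + B i j)"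

abbreviation imat_diff :: "imat \<Rightarrow> imat \<Rightarrow> imat" where
  "imat_diff A B \<equiv> (\<lambda>i j. A i j - B i j)"

abbreviation imat_smult :: "int \<Rightarrow> imat \<Rightarrow> imat" where
  "imat_smult c A \<equiv> (\<lambda>i j. c * A i j)"

abbreviation imat_bracket :: "nat \<Rightarrow> imat \<Rightarrow> imat \<Rightarrow> imat" where
  "imat_bracket n A B \<equiv> imat_diff (imat_mult n A B) (imat_mult n B A)"

lemma imat_cong_refl [simp]: "imat_cong n q A A"
  by (simp add: imat_cong_def)

lemma imat_cong_sym: "imat_cong n q A B \<Longrightarrow> imat_cong n q B A"
  by (auto simp: imat_cong_def cong_sym)

lemma imat_cong_trans [trans]: "imat_cong n q A B \<Longrightarrow> imat_cong n q B C \<Longrightarrow> imat_cong n q A C"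
  unfolding imat_cong_def by (metis cong_trans)

lemma imat_cong_dvd: "imat_cong n q A B \<Longrightarrow> q' dvd q \<Longrightarrow> imat_cong n q' A B"
  by (auto simp: imat_cong_def intro: cong_dvd_modulus)

lemma imat_cong_0_iff: "imat_cong n 0 A B \<longleftrightarrow> (\<forall>i<n. \<forall>j<n. A i j = B i j)"
  by (simp add: imat_cong_def)

lemma imat_cong_0D: "imat_cong n 0 A B \<Longrightarrow> imat_cong n q A B"
  using imat_cong_dvd by fastforce

lemma imat_cong_mod_iff: "imat_cong n q A B \<longleftrightarrow> (\<forall>i<n. \<forall>j<n. A i j mod q = B i j mod q)"
  by (simp add: imat_cong_def cong_def)

lemma imat_cong_mult:
  "imat_cong n q A A' \<Longrightarrow> imat_cong n q B B' \<Longrightarrow> imat_cong n q (imat_mult n A B) (imat_mult n A' B')"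
  unfolding imat_cong_def imat_mult_def by (auto intro!: cong_sum cong_mult)

lemma imat_cong_add:
  "imat_cong n q A A' \<Longrightarrow> imat_cong n q B B' \<Longrightarrow> imat_cong n q (imat_add A B) (imat_add A' B')"
  unfolding imat_cong_def by (auto intro: cong_add)

lemma imat_cong_diff:
  "imat_cong n q A A' \<Longrightarrow> imat_cong n q B B' \<Longrightarrow> imat_cong n q (imat_diff A B) (imat_diff A' B')"
  unfolding imat_cong_def by (auto intro: cong_diff)

lemma imat_cong_smult_cancel:
  assumes "prime p" "\<not> p dvd c" "imat_cong n p (imat_smult c A) imat_zero"
  shows "imat_cong n p A imat_zero"
  using assms unfolding imat_cong_def imat_zero_def by (auto simp: cong_0_iff prime_dvd_mult_iff)

lemma imat_cong_smult_scale:
  "imat_cong n q A A' \<Longrightarrow> imat_cong n (k * q) (imat_smult k A) (imat_smult k A')"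
  unfolding imat_cong_def
  by (auto simp: cong_iff_dvd_diff right_diff_distrib[symmetric] mult_dvd_mono)

lemma imat_mult_assoc: "imat_mult n (imat_mult n A B) C = imat_mult n A (imat_mult n B C)"
  unfolding imat_mult_def
  by (auto simp: sum_distrib_left sum_distrib_right mult.assoc intro!: ext sum.swap)

lemma imat_one_sum_left: "i < n \<Longrightarrow> (\<Sum>l<n. imat_one i l * M l j) = M i j"
  by (simp add: imat_one_def if_distrib[of "\<lambda>x. x * _"] sum.delta cong: if_cong)

lemma imat_one_sum_right: "j < n \<Longrightarrow> (\<Sum>l<n. M i l * imat_one l j) = M i j"
  by (simp add: imat_one_def if_distrib[of "\<lambda>x. _ * x"] sum.delta' cong: if_cong)

lemma imat_mult_one_left: "imat_cong n 0 (imat_mult n imat_one A) A"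
  by (simp add: imat_cong_0_iff imat_mult_def imat_one_sum_left)

lemma imat_mult_one_right: "imat_cong n 0 (imat_mult n A imat_one) A"
  by (simp add: imat_cong_0_iff imat_mult_def imat_one_sum_right)

lemma imat_mult_zero_left [simp]: "imat_mult n imat_zero A = imat_zero"
  by (simp add: imat_mult_def imat_zero_def)

lemma imat_mult_zero_right [simp]: "imat_mult n A imat_zero = imat_zero"
  by (simp add: imat_mult_def imat_zero_def)

lemma imat_mult_add_left: "imat_mult n (imat_add A B) C = imat_add (imat_mult n A C) (imat_mult n B C)"
  unfolding imat_mult_def by (auto simp: algebra_simps sum.distrib)

lemma imat_mult_add_right: "imat_mult n C (imat_add A B) = imat_add (imat_mult n C A) (imat_mult n C B)"
  unfolding imat_mult_def by (auto simp: algebra_simps sum.distrib)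

lemma imat_mult_diff_left: "imat_mult n (imat_diff A B) C = imat_diff (imat_mult n A C) (imat_mult n B C)"
  unfolding imat_mult_def by (auto simp: algebra_simps sum_subtractf)

lemma imat_mult_diff_right: "imat_mult n C (imat_diff A B) = imat_diff (imat_mult n C A) (imat_mult n C B)"
  unfolding imat_mult_def by (auto simp: algebra_simps sum_subtractf)

lemma imat_mult_smult_left: "imat_mult n (imat_smult c A) C = imat_smult c (imat_mult n A C)"
  unfolding imat_mult_def by (auto simp: algebra_simps sum_distrib_left)

lemma imat_mult_smult_right: "imat_mult n C (imat_smult c A) = imat_smult c (imat_mult n C A)"
  unfolding imat_mult_def by (auto simp: algebra_simps sum_distrib_left)

lemma imat_pow_add: "imat_cong n 0 (imat_pow n A (a + b)) (imat_mult n (imat_pow n A a) (imat_pow n A b))"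
proof (induction a)
  case 0
  show ?case using imat_cong_sym[OF imat_mult_one_left] by simp
next
  case (Suc a)
  have "imat_cong n 0 (imat_mult n A (imat_pow n A (a + b)))
      (imat_mult n A (imat_mult n (imat_pow n A a) (imat_pow n A b)))"
    by (rule imat_cong_mult[OF imat_cong_refl Suc.IH])
  thus ?case by (simp add: imat_mult_assoc)
qed

lemma imat_pow_commute: "imat_cong n 0 (imat_mult n A (imat_pow n A e)) (imat_mult n (imat_pow n A e) A)"
proof -
  have "imat_cong n 0 (imat_pow n A (e + 1)) (imat_mult n (imat_pow n A e) (imat_pow n A 1))"
    by (rule imat_pow_add)
  also have "imat_cong n 0 \<dots> (imat_mult n (imat_pow n A e) A)"
    by (rule imat_cong_mult[OF imat_cong_refl]) (simp add: imat_mult_one_right)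
  finally show ?thesis by simp
qed

lemma imat_cong_pow: "imat_cong n q A B \<Longrightarrow> imat_cong n q (imat_pow n A e) (imat_pow n B e)"
  by (induction e) (auto intro: imat_cong_mult)

lemma imat_trace_mult_commute: "imat_trace n (imat_mult n A B) = imat_trace n (imat_mult n B A)"
  unfolding imat_trace_def imat_mult_def by (subst sum.swap) (simp add: mult.commute)

lemma imat_trace_cong: "imat_cong n q A B \<Longrightarrow> [imat_trace n A = imat_trace n B] (mod q)"
  unfolding imat_trace_def imat_cong_def by (auto intro: cong_sum)

lemma imat_trace_add: "imat_trace n (imat_add A B) = imat_trace n A + imat_trace n B"
  unfolding imat_trace_def by (simp add: sum.distrib)

lemma imat_trace_smult: "imat_trace n (imat_smult c A) = c * imat_trace n A"
  unfolding imat_trace_def by (simp add: sum_distrib_left)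

section \<open>A nilpotent matrix annihilates its twisted eigenvectors\<close>

lemma imat_pow_cong_zero_mono:
  assumes "imat_cong n q (imat_pow n B N) imat_zero" "N \<le> r"
  shows "imat_cong n q (imat_pow n B r) imat_zero"
proof -
  have "imat_cong n q (imat_pow n B ((r - N) + N)) (imat_mult n (imat_pow n B (r - N)) (imat_pow n B N))"
    by (rule imat_cong_0D[OF imat_pow_add])
  also have "imat_cong n q \<dots> (imat_mult n (imat_pow n B (r - N)) imat_zero)"
    by (rule imat_cong_mult[OF imat_cong_refl assms(1)])
  finally show ?thesis using assms(2) by simp
qed

lemma imat_bracket_sandwich:
  fixes c :: int
  assumes rel: "imat_cong n q (imat_bracket n B A) (imat_smult c A)"
  defines "f \<equiv> \<lambda>r s. imat_mult n (imat_mult n (imat_pow n B r) A) (imat_pow n B s)"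
  shows "imat_cong n q (imat_smult c (f r s)) (imat_diff (f (Suc r) s) (f r (Suc s)))"
proof -
  let ?Br = "imat_pow n B r" and ?Bs = "imat_pow n B s"
  have "imat_cong n q (imat_smult c (f r s)) (imat_mult n (imat_mult n ?Br (imat_smult c A)) ?Bs)"
    unfolding f_def imat_mult_smult_left imat_mult_smult_right by (rule imat_cong_refl)
  also have "imat_cong n q \<dots> (imat_mult n (imat_mult n ?Br (imat_bracket n B A)) ?Bs)"
    by (rule imat_cong_mult[OF imat_cong_mult[OF imat_cong_refl imat_cong_sym[OF rel]] imat_cong_refl])
  also have "imat_cong n q \<dots> (imat_diff (imat_mult n (imat_mult n ?Br (imat_mult n B A)) ?Bs)
      (imat_mult n (imat_mult n ?Br (imat_mult n A B)) ?Bs))"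
    unfolding imat_mult_diff_left imat_mult_diff_right by (rule imat_cong_refl)
  also have "imat_cong n q \<dots> (imat_diff (f (Suc r) s) (f r (Suc s)))"
  proof (rule imat_cong_diff)
    have "imat_cong n q (imat_mult n ?Br B) (imat_pow n B (Suc r))"
      using imat_cong_0D[OF imat_cong_sym[OF imat_pow_commute]] by simp
    thus "imat_cong n q (imat_mult n (imat_mult n ?Br (imat_mult n B A)) ?Bs) (f (Suc r) s)"
      unfolding f_def imat_mult_assoc[symmetric] by (intro imat_cong_mult imat_cong_refl)
    show "imat_cong n q (imat_mult n (imat_mult n ?Br (imat_mult n A B)) ?Bs) (f r (Suc s))"
      by (simp add: f_def imat_mult_assoc)
  qed
  finally show ?thesis .
qed

text \<open>Descending induction on r + s: the sandwiches B^r A B^s vanish once r \<ge> N or s \<ge> N,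
  and the relation expresses c B^r A B^s through sandwiches of larger total degree.\<close>

lemma imat_bracket_nilpotent_annihilates:
  fixes p c :: int
  assumes p: "prime p" and c: "\<not> p dvd c"
    and rel: "imat_cong n p (imat_bracket n B A) (imat_smult c A)"
    and nil: "imat_cong n p (imat_pow n B N) imat_zero"
  shows "imat_cong n p A imat_zero"
proof -
  define f where "f r s = imat_mult n (imat_mult n (imat_pow n B r) A) (imat_pow n B s)" for r s
  have outer: "imat_cong n p (f r s) imat_zero" if "N \<le> r \<or> N \<le> s" for r s
    using that
  proof
    assume "N \<le> r"
    hence "imat_cong n p (f r s) (imat_mult n (imat_mult n imat_zero A) (imat_pow n B s))"
      unfolding f_def by (intro imat_cong_mult imat_cong_refl imat_pow_cong_zero_mono[OF nil])
    thus ?thesis by simp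
  next
    assume "N \<le> s"
    hence "imat_cong n p (f r s) (imat_mult n (imat_mult n (imat_pow n B r) A) imat_zero)"
      unfolding f_def by (intro imat_cong_mult imat_cong_refl imat_pow_cong_zero_mono[OF nil])
    thus ?thesis by simp
  qed
  have "\<forall>r s. 2 * N \<le> r + s + d \<longrightarrow> imat_cong n p (f r s) imat_zero" for d
  proof (induction d)
    case 0
    show ?case by (auto intro: outer)
  next
    case (Suc d)
    show ?case
    proof (intro allI impI)
      fix r s assume h: "2 * N \<le> r + s + Suc d"
      show "imat_cong n p (f r s) imat_zero"
      proof (cases "N \<le> r \<or> N \<le> s")
        case True
        then show ?thesis by (rule outer)
      next
        case False
        have "imat_cong n p (f (Suc r) s) imat_zero" "imat_cong n p (f r (Suc s)) imat_zero"
          using Suc.IH h by auto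
        hence "imat_cong n p (imat_smult c (f r s)) (imat_diff imat_zero imat_zero)"
          using imat_cong_trans[OF imat_bracket_sandwich[OF rel] imat_cong_diff]
          unfolding f_def by blast
        hence "imat_cong n p (imat_smult c (f r s)) imat_zero"
          by (simp add: imat_zero_def)
        thus ?thesis by (rule imat_cong_smult_cancel[OF p c])
      qed
    qed
  qed
  from this[of "2 * N"] have "imat_cong n p (f 0 0) imat_zero" by simp
  moreover have "imat_cong n 0 A (f 0 0)"
    unfolding f_def imat_pow.simps
    using imat_cong_sym[OF imat_cong_trans[OF imat_mult_one_right imat_mult_one_left]] .
  ultimately show ?thesis using imat_cong_0D imat_cong_trans by blast
qed

section \<open>Nilpotency modulo p\<close>

lemma imat_pow_cong_repeats:
  assumes "q > 0"
  obtains a b where "a < b" "imat_cong n q (imat_pow n B a) (imat_pow n B b)"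
proof -
  define g where "g k = map (\<lambda>i. map (\<lambda>j. imat_pow n B k i j mod q) [0..<n]) [0..<n]" for k
  define Rows where "Rows = {xs. set xs \<subseteq> {0..<q} \<and> length xs = n}"
  have "finite Rows" unfolding Rows_def by (rule finite_lists_length_eq) simp
  hence "finite {xss. set xss \<subseteq> Rows \<and> length xss = n}" by (rule finite_lists_length_eq)
  moreover have "range g \<subseteq> {xss. set xss \<subseteq> Rows \<and> length xss = n}"
    unfolding g_def Rows_def using assms by auto
  ultimately have "\<not> inj g"
    using finite_subset finite_imageD infinite_UNIV_nat by blast
  then obtain a b where "a \<noteq> b" "g a = g b" unfolding inj_def by blast
  then obtain a b where ab: "a < b" "g a = g b" by (metis linorder_neqE_nat)
  have "imat_cong n q (imat_pow n B a) (imat_pow n B b)"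
    unfolding imat_cong_mod_iff
  proof (intro allI impI)
    fix i j assume "i < n" "j < n"
    moreover have "g a ! i ! j = g b ! i ! j" using ab by simp
    ultimately show "imat_pow n B a i j mod q = imat_pow n B b i j mod q" unfolding g_def by simp
  qed
  thus ?thesis by (rule that[OF ab(1)])
qed

lemma imat_pow_cong_periodic:
  assumes rep: "imat_cong n q (imat_pow n B a) (imat_pow n B (a + d))" and "a \<le> s"
  shows "imat_cong n q (imat_pow n B (s + t * d)) (imat_pow n B s)"
proof (induction t)
  case 0
  show ?case by simp
next
  case (Suc t)
  let ?s = "s + t * d"
  have "imat_cong n q (imat_pow n B (?s + d)) (imat_mult n (imat_pow n B (?s - a)) (imat_pow n B (a + d)))"
    using imat_cong_0D[OF imat_pow_add[of n B "?s - a" "a + d"]] \<open>a \<le> s\<close>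
    by (simp add: add.assoc)
  also have "imat_cong n q \<dots> (imat_mult n (imat_pow n B (?s - a)) (imat_pow n B a))"
    by (rule imat_cong_mult[OF imat_cong_refl imat_cong_sym[OF rep]])
  also have "imat_cong n q \<dots> (imat_pow n B ?s)"
    using imat_cong_0D[OF imat_cong_sym[OF imat_pow_add[of n B "?s - a" a]]] \<open>a \<le> s\<close> by simp
  finally show ?case using Suc.IH by (simp add: ac_simps imat_cong_trans)
qed

lemma imat_pow_eventually_idempotent:
  assumes "q > 0"
  obtains N where "N \<ge> 1"
    "imat_cong n q (imat_mult n (imat_pow n B N) (imat_pow n B N)) (imat_pow n B N)"
proof -
  obtain a b where ab: "a < b" "imat_cong n q (imat_pow n B a) (imat_pow n B b)"
    using imat_pow_cong_repeats[OF assms] .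
  define d where "d = b - a"
  define N where "N = (a + 1) * d"
  have d: "d \<ge> 1" "b = a + d" using ab(1) unfolding d_def by auto
  have "a \<le> N" using mult_le_mono2[OF d(1), of a] unfolding N_def by (simp add: trans_le_add2)
  hence "imat_cong n q (imat_pow n B (N + (a + 1) * d)) (imat_pow n B N)"
    by (rule imat_pow_cong_periodic[OF ab(2)[unfolded d(2)]])
  hence "imat_cong n q (imat_pow n B (N + N)) (imat_pow n B N)" unfolding N_def .
  hence "imat_cong n q (imat_mult n (imat_pow n B N) (imat_pow n B N)) (imat_pow n B N)"
    using imat_cong_trans[OF imat_cong_0D[OF imat_cong_sym[OF imat_pow_add]]] by blast
  moreover have "N \<ge> 1" using d(1) unfolding N_def by simp
  ultimately show ?thesis using that by blast
qed

text \<open>From B'B - BB' \<equiv> cB one gets c tr(B^(e+1)) \<equiv> tr(B'B^(e+1)) - tr(BB'B^e) = 0,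
  the last step by cyclicity of the trace.\<close>

lemma imat_trace_pow_cong_zero:
  fixes p c :: int
  assumes p: "prime p" and c: "\<not> p dvd c"
    and rel: "imat_cong n p (imat_bracket n B' B) (imat_smult c B)"
  shows "[imat_trace n (imat_pow n B (Suc e)) = 0] (mod p)"
proof -
  define T where "T = imat_pow n B e"
  have rel': "imat_cong n p (imat_mult n B' B) (imat_add (imat_mult n B B') (imat_smult c B))"
    using imat_cong_add[OF rel imat_cong_refl, of "imat_mult n B B'"] by (simp add: add.commute)
  have "imat_trace n (imat_mult n B' (imat_mult n B T)) = imat_trace n (imat_mult n (imat_mult n B' B) T)"
    by (simp add: imat_mult_assoc)
  also have "[\<dots> = imat_trace n (imat_mult n (imat_add (imat_mult n B B') (imat_smult c B)) T)] (mod p)"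
    by (rule imat_trace_cong[OF imat_cong_mult[OF rel' imat_cong_refl]])
  also have "imat_trace n (imat_mult n (imat_add (imat_mult n B B') (imat_smult c B)) T)
      = imat_trace n (imat_mult n (imat_mult n B B') T) + c * imat_trace n (imat_mult n B T)"
    by (simp only: imat_mult_add_left imat_mult_smult_left imat_trace_add imat_trace_smult)
  also have "imat_trace n (imat_mult n (imat_mult n B B') T) = imat_trace n (imat_mult n B' (imat_mult n T B))"
    by (metis imat_mult_assoc imat_trace_mult_commute)
  also have "[imat_trace n (imat_mult n B' (imat_mult n T B)) + c * imat_trace n (imat_mult n B T)
      = imat_trace n (imat_mult n B' (imat_mult n B T)) + c * imat_trace n (imat_mult n B T)] (mod p)"
    unfolding T_def
    by (intro cong_add cong_refl imat_trace_cong imat_cong_mult imat_cong_refl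
        imat_cong_0D[OF imat_cong_sym[OF imat_pow_commute]])
  finally have "[imat_trace n (imat_mult n B' (imat_mult n B T)) + 0
      = imat_trace n (imat_mult n B' (imat_mult n B T)) + c * imat_trace n (imat_mult n B T)] (mod p)"
    by simp
  hence "[c * imat_trace n (imat_mult n B T) = 0] (mod p)"
    by (metis cong_add_lcancel cong_sym)
  with p c show ?thesis
    unfolding T_def by (simp add: cong_0_iff prime_dvd_mult_iff)
qed

definition vec_dot :: "nat \<Rightarrow> (nat \<Rightarrow> int) \<Rightarrow> (nat \<Rightarrow> int) \<Rightarrow> int" where
  "vec_dot n u v = (\<Sum>l<n. u l * v l)"

definition imat_vec_mult :: "nat \<Rightarrow> imat \<Rightarrow> (nat \<Rightarrow> int) \<Rightarrow> nat \<Rightarrow> int" where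
  "imat_vec_mult n E v = (\<lambda>i. \<Sum>l<n. E i l * v l)"

definition vec_imat_mult :: "nat \<Rightarrow> (nat \<Rightarrow> int) \<Rightarrow> imat \<Rightarrow> nat \<Rightarrow> int" where
  "vec_imat_mult n u E = (\<lambda>j. \<Sum>l<n. u l * E l j)"

definition vec_cong :: "nat \<Rightarrow> int \<Rightarrow> (nat \<Rightarrow> int) \<Rightarrow> (nat \<Rightarrow> int) \<Rightarrow> bool" where
  "vec_cong n q u v \<longleftrightarrow> (\<forall>i<n. [u i = v i] (mod q))"

definition biorthogonal :: "nat \<Rightarrow> int \<Rightarrow> nat \<Rightarrow> (nat \<Rightarrow> nat \<Rightarrow> int) \<Rightarrow> (nat \<Rightarrow> nat \<Rightarrow> int) \<Rightarrow> bool" where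
  "biorthogonal n q k us vs \<longleftrightarrow>
     (\<forall>i<k. \<forall>j<k. [vec_dot n (us i) (vs j) = (if i = j then 1 else 0)] (mod q))"

lemma det_cong:
  fixes A B :: "int mat"
  assumes A: "A \<in> carrier_mat k k" and B: "B \<in> carrier_mat k k"
    and cong: "\<And>i j. i < k \<Longrightarrow> j < k \<Longrightarrow> [A $$ (i,j) = B $$ (i,j)] (mod q)"
  shows "[det A = det B] (mod q)"
  unfolding det_def'[OF A] det_def'[OF B]
proof (intro cong_sum cong_mult cong_refl cong_prod)
  fix \<sigma> i assume "\<sigma> \<in> {\<sigma>. \<sigma> permutes {0..<k}}" and i: "i \<in> {0..<k}"
  hence "\<sigma> i \<in> {0..<k}" by (simp add: permutes_in_image)
  thus "[A $$ (i, \<sigma> i) = B $$ (i, \<sigma> i)] (mod q)" using i cong by auto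
qed

text \<open>The k \<times> k matrix of dot products factors through n-dimensional space, so for k > n
  it has determinant 0, which cannot be \<equiv> det 1 = 1 modulo a prime.\<close>

lemma biorthogonal_length_le:
  assumes p: "prime p" and bio: "biorthogonal n p k us vs"
  shows "k \<le> n"
proof (rule ccontr)
  assume "\<not> k \<le> n"
  hence nk: "n < k" by simp
  define U :: "int mat" where "U = mat k k (\<lambda>(i,l). if l < n then us i l else 0)"
  define V :: "int mat" where "V = mat k k (\<lambda>(l,j). if l < n then vs j l else 0)"
  have U: "U \<in> carrier_mat k k" and V: "V \<in> carrier_mat k k" unfolding U_def V_def by auto
  have UV: "(U * V) $$ (i,j) = vec_dot n (us i) (vs j)" if "i < k" "j < k" for i j
  proof -
    have "(U * V) $$ (i,j) = (\<Sum>l\<in>{0..<k}. (if l < n then us i l * vs j l else 0))"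
      using that U V unfolding U_def V_def
      by (simp add: scalar_prod_def row_def col_def, intro sum.cong) auto
    also have "\<dots> = (\<Sum>l\<in>{l\<in>{0..<k}. l < n}. us i l * vs j l)"
      by (rule sum.inter_filter[symmetric]) simp
    also have "{l\<in>{0..<k}. l < n} = {..<n}" using nk by auto
    finally show ?thesis unfolding vec_dot_def .
  qed
  have "det V = 0"
    unfolding det_def'[OF V]
  proof (rule sum.neutral, intro ballI)
    fix \<sigma> assume "\<sigma> \<in> {\<sigma>. \<sigma> permutes {0..<k}}"
    hence "\<sigma> n \<in> {0..<k}" using nk by (simp add: permutes_in_image)
    hence "V $$ (n, \<sigma> n) = 0" using nk unfolding V_def by simp
    hence "(\<Prod>i = 0..<k. V $$ (i, \<sigma> i)) = 0" using nk by (intro prod_zero) auto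
    thus "signof \<sigma> * (\<Prod>i = 0..<k. V $$ (i, \<sigma> i)) = 0" by simp
  qed
  hence "det (U * V) = 0" using det_mult[OF U V] by simp
  moreover have "[det (U * V) = det (1\<^sub>m k :: int mat)] (mod p)"
    by (rule det_cong[OF mult_carrier_mat[OF U V] one_carrier_mat])
      (use UV bio in \<open>simp add: biorthogonal_def\<close>)
  ultimately have "p dvd 1" by (simp add: cong_0_iff cong_sym_eq)
  thus False using p by (simp add: prime_int_iff)
qed

lemma imat_vec_mult_sub_rank_one:
  "imat_vec_mult n (\<lambda>i j. E i j - v i * u j) x a = imat_vec_mult n E x a - v a * vec_dot n u x"
  unfolding imat_vec_mult_def vec_dot_def by (simp add: algebra_simps sum_subtractf sum_distrib_left)

lemma vec_imat_mult_sub_rank_one: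
  "vec_imat_mult n x (\<lambda>i j. E i j - v i * u j) b = vec_imat_mult n x E b - vec_dot n x v * u b"
  unfolding vec_imat_mult_def vec_dot_def
  by (simp add: algebra_simps sum_subtractf sum_distrib_right sum_distrib_left)

lemma imat_trace_sub_rank_one:
  "imat_trace n (\<lambda>i j. E i j - v i * u j) = imat_trace n E - vec_dot n u v"
  unfolding imat_trace_def vec_dot_def by (simp add: sum_subtractf mult.commute)

lemma imat_mult_sub_rank_one_square:
  "imat_mult n (\<lambda>i j. E i j - v i * u j) (\<lambda>i j. E i j - v i * u j) a b
   = imat_mult n E E a b - v a * vec_imat_mult n u E b - imat_vec_mult n E v a * u b
     + v a * vec_dot n u v * u b"
proof -
  have "imat_mult n (\<lambda>i j. E i j - v i * u j) (\<lambda>i j. E i j - v i * u j) a b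
     = (\<Sum>l<n. E a l * E l b - v a * (u l * E l b) - (E a l * v l) * u b + v a * (u l * v l) * u b)"
    unfolding imat_mult_def by (rule sum.cong) (auto simp: algebra_simps)
  thus ?thesis
    unfolding imat_mult_def vec_imat_mult_def imat_vec_mult_def vec_dot_def
    by (simp add: sum.distrib sum_subtractf sum_distrib_left sum_distrib_right)
qed

lemma imat_idempotent_sub_rank_one:
  assumes idem: "imat_cong n q (imat_mult n E E) E"
    and Ev: "vec_cong n q (imat_vec_mult n E v) v" and uE: "vec_cong n q (vec_imat_mult n u E) u"
    and uv: "[vec_dot n u v = 1] (mod q)"
  defines "E' \<equiv> \<lambda>i j. E i j - v i * u j"
  shows "imat_cong n q (imat_mult n E' E') E'"
  unfolding imat_cong_def
proof (intro allI impI)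
  fix a b assume ab: "a < n" "b < n"
  have "imat_mult n E' E' a b = imat_mult n E E a b - v a * vec_imat_mult n u E b
      - imat_vec_mult n E v a * u b + v a * vec_dot n u v * u b"
    unfolding E'_def by (rule imat_mult_sub_rank_one_square)
  also have "[\<dots> = E a b - v a * u b - v a * u b + v a * 1 * u b] (mod q)"
    using idem Ev uE ab unfolding imat_cong_def vec_cong_def
    by (intro cong_add cong_diff cong_mult cong_refl uv) auto
  also have "E a b - v a * u b - v a * u b + v a * 1 * u b = E' a b" unfolding E'_def by simp
  finally show "[imat_mult n E' E' a b = E' a b] (mod q)" .
qed

text \<open>A nonzero entry E i0 j0 of an idempotent gives the rank one idempotent
  v u^T with v the column j0 and u a multiple of the row i0, normalised so that u \<cdot> v \<equiv> 1.\<close>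

lemma imat_idempotent_rank_one_part:
  fixes p :: int
  assumes p: "prime p" and idem: "imat_cong n p (imat_mult n E E) E"
    and ij: "i0 < n" "j0 < n" "\<not> [E i0 j0 = 0] (mod p)"
  obtains u v where "[vec_dot n u v = 1] (mod p)"
    "vec_cong n p (imat_vec_mult n E v) v" "vec_cong n p (vec_imat_mult n u E) u"
    "\<And>x. vec_cong n p (imat_vec_mult n E x) (\<lambda>_. 0) \<Longrightarrow> [vec_dot n u x = 0] (mod p)"
    "\<And>y. vec_cong n p (vec_imat_mult n y E) (\<lambda>_. 0) \<Longrightarrow> [vec_dot n y v = 0] (mod p)"
proof -
  have "coprime (E i0 j0) p"
    using ij(3) p by (simp add: cong_0_iff prime_imp_coprime coprime_commute)
  then obtain w where w: "[E i0 j0 * w = 1] (mod p)" using cong_solve_coprime_int by blast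
  define v where "v = (\<lambda>i. E i j0)"
  define u where "u = (\<lambda>l. w * E i0 l)"
  have EE: "[imat_mult n E E a b = E a b] (mod p)" if "a < n" "b < n" for a b
    using idem that unfolding imat_cong_def by blast
  have "vec_dot n u v = w * imat_mult n E E i0 j0"
    unfolding vec_dot_def u_def v_def imat_mult_def by (simp add: sum_distrib_left mult.assoc)
  also have "[\<dots> = w * E i0 j0] (mod p)" by (intro cong_mult cong_refl EE ij)
  finally have "[vec_dot n u v = 1] (mod p)" using w by (metis cong_trans mult.commute)
  moreover have "vec_cong n p (imat_vec_mult n E v) v"
    using EE ij(2) unfolding vec_cong_def imat_vec_mult_def v_def imat_mult_def by simp
  moreover have "vec_cong n p (vec_imat_mult n u E) u"
    unfolding vec_cong_def
  proof (intro allI impI)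
    fix b assume "b < n"
    have "vec_imat_mult n u E b = w * imat_mult n E E i0 b"
      unfolding vec_imat_mult_def u_def imat_mult_def by (simp add: sum_distrib_left mult.assoc)
    also have "[\<dots> = u b] (mod p)" unfolding u_def by (intro cong_mult cong_refl EE ij \<open>b < n\<close>)
    finally show "[vec_imat_mult n u E b = u b] (mod p)" .
  qed
  moreover have "[vec_dot n u x = 0] (mod p)" if "vec_cong n p (imat_vec_mult n E x) (\<lambda>_. 0)" for x
  proof -
    have "vec_dot n u x = w * imat_vec_mult n E x i0"
      unfolding vec_dot_def imat_vec_mult_def u_def by (simp add: sum_distrib_left mult.assoc)
    thus ?thesis using that ij(1) unfolding vec_cong_def by (metis cong_scalar_left mult_zero_right)
  qed
  moreover have "[vec_dot n y v = 0] (mod p)" if "vec_cong n p (vec_imat_mult n y E) (\<lambda>_. 0)" for y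
    using that ij(2) unfolding vec_cong_def vec_dot_def vec_imat_mult_def v_def by simp
  ultimately show ?thesis using that by blast
qed

lemma imat_vec_mult_sub_rank_one_cong_zero:
  assumes "vec_cong n q (imat_vec_mult n E x) (\<lambda>a. c * v a)" "[vec_dot n u x = c] (mod q)"
  shows "vec_cong n q (imat_vec_mult n (\<lambda>i j. E i j - v i * u j) x) (\<lambda>_. 0)"
  using assms unfolding vec_cong_def imat_vec_mult_sub_rank_one
  by (metis (no_types) cong_diff cong_scalar_left diff_self mult.commute)

lemma vec_imat_mult_sub_rank_one_cong_zero:
  assumes "vec_cong n q (vec_imat_mult n y E) (\<lambda>b. c * u b)" "[vec_dot n y v = c] (mod q)"
  shows "vec_cong n q (vec_imat_mult n y (\<lambda>i j. E i j - v i * u j)) (\<lambda>_. 0)"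
  using assms unfolding vec_cong_def vec_imat_mult_sub_rank_one
  by (metis (no_types) cong_diff cong_scalar_right diff_self)

text \<open>Splitting off rank one idempotents one at a time, each contributing 1 to the trace;
  the biorthogonal system of the parts split off so far bounds their number by n.\<close>

lemma imat_idempotent_trace_biorthogonal:
  fixes p :: int
  assumes p: "prime p"
  shows "imat_cong n p (imat_mult n E E) E \<Longrightarrow> biorthogonal n p k us vs \<Longrightarrow>
    (\<forall>i<k. vec_cong n p (imat_vec_mult n E (vs i)) (\<lambda>_. 0)
        \<and> vec_cong n p (vec_imat_mult n (us i) E) (\<lambda>_. 0)) \<Longrightarrow>
    \<exists>r. [imat_trace n E = int r] (mod p) \<and> r + k \<le> n \<and> (\<not> imat_cong n p E imat_zero \<longrightarrow> 1 \<le> r)"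
proof (induction "n - k" arbitrary: k E us vs rule: less_induct)
  case less
  note idem = less.prems(1) and bio = less.prems(2) and ann = less.prems(3)
  show ?case
  proof (cases "imat_cong n p E imat_zero")
    case True
    have "[imat_trace n E = int 0] (mod p)"
      using imat_trace_cong[OF True] by (simp add: imat_trace_def imat_zero_def)
    thus ?thesis using biorthogonal_length_le[OF p bio] True by (intro exI[of _ 0]) auto
  next
    case False
    then obtain i0 j0 where ij: "i0 < n" "j0 < n" "\<not> [E i0 j0 = 0] (mod p)"
      unfolding imat_cong_def imat_zero_def by blast
    obtain u v where uv: "[vec_dot n u v = 1] (mod p)"
      and Ev: "vec_cong n p (imat_vec_mult n E v) v" and uE: "vec_cong n p (vec_imat_mult n u E) u"
      and u_perp: "\<And>x. vec_cong n p (imat_vec_mult n E x) (\<lambda>_. 0) \<Longrightarrow> [vec_dot n u x = 0] (mod p)"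
      and v_perp: "\<And>y. vec_cong n p (vec_imat_mult n y E) (\<lambda>_. 0) \<Longrightarrow> [vec_dot n y v = 0] (mod p)"
      using imat_idempotent_rank_one_part[OF p idem ij] by blast
    define E' where "E' = (\<lambda>i j. E i j - v i * u j)"
    define us' where "us' = us(k := u)"
    define vs' where "vs' = vs(k := v)"
    have idem': "imat_cong n p (imat_mult n E' E') E'"
      unfolding E'_def by (rule imat_idempotent_sub_rank_one[OF idem Ev uE uv])
    have bio': "biorthogonal n p (Suc k) us' vs'"
      using bio uv u_perp v_perp ann
      by (auto simp: biorthogonal_def us'_def vs'_def less_Suc_eq)
    have ann': "\<forall>i<Suc k. vec_cong n p (imat_vec_mult n E' (vs' i)) (\<lambda>_. 0)
        \<and> vec_cong n p (vec_imat_mult n (us' i) E') (\<lambda>_. 0)"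
    proof (intro allI impI conjI)
      fix i assume "i < Suc k"
      hence "i = k \<or> i < k" by auto
      then show "vec_cong n p (imat_vec_mult n E' (vs' i)) (\<lambda>_. 0)"
        unfolding E'_def
        by (rule disjE; intro imat_vec_mult_sub_rank_one_cong_zero)
          (use Ev uv ann u_perp in \<open>auto simp: vs'_def\<close>)
      show "vec_cong n p (vec_imat_mult n (us' i) E') (\<lambda>_. 0)"
        using \<open>i = k \<or> i < k\<close> unfolding E'_def
        by (rule disjE; intro vec_imat_mult_sub_rank_one_cong_zero)
          (use uE uv ann v_perp in \<open>auto simp: us'_def\<close>)
    qed
    have "n - Suc k < n - k" using biorthogonal_length_le[OF p bio'] by simp
    then obtain r where r: "[imat_trace n E' = int r] (mod p)" "r + Suc k \<le> n"
      using less.hyps idem' bio' ann' by blast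
    have "imat_trace n E = imat_trace n E' + vec_dot n u v"
      unfolding E'_def imat_trace_sub_rank_one by simp
    also have "[\<dots> = int r + 1] (mod p)" by (intro cong_add r uv)
    finally have "[imat_trace n E = int (Suc r)] (mod p)" by (simp add: add.commute)
    thus ?thesis using r(2) by (intro exI[of _ "Suc r"]) auto
  qed
qed

lemma imat_idempotent_trace:
  fixes p :: int
  assumes "prime p" "imat_cong n p (imat_mult n E E) E"
  obtains r where "[imat_trace n E = int r] (mod p)" "r \<le> n" "\<not> imat_cong n p E imat_zero \<Longrightarrow> 1 \<le> r"
  using imat_idempotent_trace_biorthogonal[OF assms, of 0] that by (auto simp: biorthogonal_def)

text \<open>Since n < p, the trace of the idempotent power B^N, which is \<equiv> 0, is its rank.\<close>

lemma imat_bracket_nilpotent: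
  fixes p c :: int
  assumes p: "prime p" and np: "int n < p" and c: "\<not> p dvd c"
    and rel: "imat_cong n p (imat_bracket n B' B) (imat_smult c B)"
  obtains N where "imat_cong n p (imat_pow n B N) imat_zero"
proof -
  obtain N where N: "N \<ge> 1"
    and idem: "imat_cong n p (imat_mult n (imat_pow n B N) (imat_pow n B N)) (imat_pow n B N)"
    using imat_pow_eventually_idempotent[of p] p prime_gt_0_int by metis
  obtain r where r: "[imat_trace n (imat_pow n B N) = int r] (mod p)" "r \<le> n"
    "\<not> imat_cong n p (imat_pow n B N) imat_zero \<Longrightarrow> 1 \<le> r"
    using imat_idempotent_trace[OF p idem] by blast
  have "[imat_trace n (imat_pow n B N) = 0] (mod p)"
    using imat_trace_pow_cong_zero[OF p c rel, of "N - 1"] N by simp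
  hence "p dvd int r" using r(1) by (metis cong_0_iff cong_sym cong_trans)
  moreover have "int r < p" using r(2) np by linarith
  ultimately have "r = 0" using zdvd_imp_le by fastforce
  with r(3) show ?thesis using that by auto
qed

lemma imat_bracket_chain_cong_zero:
  fixes p c c' :: int
  assumes p: "prime p" and np: "int n < p" and c: "\<not> p dvd c" and c': "\<not> p dvd c'"
    and rel: "imat_cong n p (imat_bracket n B A) (imat_smult c A)"
    and rel': "imat_cong n p (imat_bracket n B' B) (imat_smult c' B)"
  shows "imat_cong n p A imat_zero"
proof -
  obtain N where "imat_cong n p (imat_pow n B N) imat_zero"
    using imat_bracket_nilpotent[OF p np c' rel'] .
  thus ?thesis by (rule imat_bracket_nilpotent_annihilates[OF p c rel])
qed

section \<open>The relation to first order\<close>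

text \<open>The division in (X - 1)/s is exact only when X \<equiv> 1 (mod s).\<close>

definition imat_deviation :: "int \<Rightarrow> imat \<Rightarrow> imat" where
  "imat_deviation s X = (\<lambda>i j. (X i j - imat_one i j) div s)"

lemma imat_one_plus_deviation:
  "imat_cong n s X imat_one \<Longrightarrow>
    imat_cong n 0 X (imat_add imat_one (imat_smult s (imat_deviation s X)))"
  by (auto simp: imat_cong_def imat_deviation_def cong_iff_dvd_diff)

lemma imat_deviation_cong_zero_iff:
  assumes "imat_cong n s X imat_one"
  shows "imat_cong n p (imat_deviation s X) imat_zero \<longleftrightarrow> imat_cong n (s * p) X imat_one"
proof -
  have "[(X i j - imat_one i j) div s = 0] (mod p) \<longleftrightarrow> [X i j = imat_one i j] (mod s * p)"
    if "i < n" "j < n" for i j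
  proof -
    have "s dvd X i j - imat_one i j"
      using assms that by (simp add: imat_cong_def cong_iff_dvd_diff)
    then obtain t where "X i j - imat_one i j = s * t" by (rule dvdE)
    thus ?thesis
      by (cases "s = 0") (simp_all add: cong_0_iff cong_iff_dvd_diff mult_dvd_mono)
  qed
  thus ?thesis unfolding imat_cong_def imat_deviation_def imat_zero_def by auto
qed

lemma imat_inverse_cong_one:
  assumes "imat_cong n q X imat_one" "imat_cong n q (imat_mult n Xi X) imat_one"
  shows "imat_cong n q Xi imat_one"
proof -
  have "imat_cong n q Xi (imat_mult n Xi imat_one)"
    by (rule imat_cong_0D[OF imat_cong_sym[OF imat_mult_one_right]])
  also have "imat_cong n q \<dots> (imat_mult n Xi X)"
    by (rule imat_cong_mult[OF imat_cong_refl imat_cong_sym[OF assms(1)]])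
  finally show ?thesis using assms(2) by (rule imat_cong_trans)
qed

lemma imat_mult_one_plus:
  assumes "i < n" "j < n"
  shows "imat_mult n (imat_add imat_one (imat_smult s A)) (imat_add imat_one (imat_smult t B)) i j
    = imat_one i j + t * B i j + s * A i j + s * t * imat_mult n A B i j"
proof -
  have "imat_mult n (imat_add imat_one (imat_smult s A)) (imat_add imat_one (imat_smult t B)) i j
    = (\<Sum>l<n. imat_one i l * imat_one l j + t * (imat_one i l * B l j) + s * (A i l * imat_one l j)
        + s * t * (A i l * B l j))"
    unfolding imat_mult_def by (rule sum.cong) (auto simp: algebra_simps)
  also have "\<dots> = (\<Sum>l<n. imat_one i l * imat_one l j) + t * (\<Sum>l<n. imat_one i l * B l j)
      + s * (\<Sum>l<n. A i l * imat_one l j) + s * t * (\<Sum>l<n. A i l * B l j)"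
    by (simp add: sum.distrib sum_distrib_left)
  also have "\<dots> = imat_one i j + t * B i j + s * A i j + s * t * imat_mult n A B i j"
    using assms by (simp add: imat_one_sum_left imat_one_sum_right imat_mult_def)
  finally show ?thesis .
qed

lemma imat_commutator_one_plus:
  assumes X: "imat_cong n 0 X (imat_add imat_one (imat_smult s A))"
    and Y: "imat_cong n 0 Y (imat_add imat_one (imat_smult t B))"
    and Xi: "imat_cong n q (imat_mult n Xi X) imat_one" "imat_cong n r Xi imat_one"
    and Yi: "imat_cong n q (imat_mult n Yi Y) imat_one" "imat_cong n r Yi imat_one"
    and q: "s * t * r = q"
  shows "imat_cong n q (imat_mult n Xi (imat_mult n Yi (imat_mult n X Y)))
    (imat_add imat_one (imat_smult (s * t) (imat_bracket n A B)))"
proof -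
  let ?X = "imat_add imat_one (imat_smult s A)" and ?Y = "imat_add imat_one (imat_smult t B)"
  define D where "D = imat_bracket n A B"
  have XY: "imat_cong n 0 (imat_mult n X Y) (imat_add (imat_mult n Y X) (imat_smult (s * t) D))"
  proof -
    have "imat_cong n 0 (imat_mult n ?X ?Y) (imat_add (imat_mult n ?Y ?X) (imat_smult (s * t) D))"
      unfolding imat_cong_0_iff by (auto simp: D_def imat_mult_one_plus algebra_simps)
    moreover have "imat_cong n 0 (imat_mult n Y X) (imat_mult n ?Y ?X)"
      by (rule imat_cong_mult[OF Y X])
    ultimately show ?thesis
      using imat_cong_mult[OF X Y] by (auto simp: imat_cong_0_iff)
  qed
  have YX: "imat_cong n q (imat_mult n Xi (imat_mult n Yi (imat_mult n Y X))) imat_one"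
  proof -
    have "imat_mult n Xi (imat_mult n Yi (imat_mult n Y X)) = imat_mult n Xi (imat_mult n (imat_mult n Yi Y) X)"
      by (simp only: imat_mult_assoc)
    hence "imat_cong n q (imat_mult n Xi (imat_mult n Yi (imat_mult n Y X))) (imat_mult n Xi (imat_mult n imat_one X))"
      by (simp add: imat_cong_mult[OF imat_cong_refl imat_cong_mult[OF Yi(1) imat_cong_refl]])
    also have "imat_cong n q \<dots> (imat_mult n Xi X)"
      by (rule imat_cong_0D[OF imat_cong_mult[OF imat_cong_refl imat_mult_one_left]])
    finally show ?thesis using Xi(1) by (rule imat_cong_trans)
  qed
  have "imat_cong n r (imat_mult n Xi (imat_mult n Yi D)) (imat_mult n imat_one (imat_mult n imat_one D))"
    by (intro imat_cong_mult Xi(2) Yi(2) imat_cong_refl)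
  also have "imat_cong n r \<dots> D"
    by (rule imat_cong_0D[OF imat_cong_trans[OF imat_cong_mult[OF imat_cong_refl imat_mult_one_left] imat_mult_one_left]])
  finally have XiYiD: "imat_cong n q (imat_smult (s * t) (imat_mult n Xi (imat_mult n Yi D))) (imat_smult (s * t) D)"
    using imat_cong_smult_scale[of n r _ D "s * t"] unfolding q by blast
  have "imat_cong n q (imat_mult n Xi (imat_mult n Yi (imat_mult n X Y)))
      (imat_mult n Xi (imat_mult n Yi (imat_add (imat_mult n Y X) (imat_smult (s * t) D))))"
    by (rule imat_cong_0D, intro imat_cong_mult imat_cong_refl XY)
  also have "imat_cong n q \<dots> (imat_add (imat_mult n Xi (imat_mult n Yi (imat_mult n Y X)))
      (imat_smult (s * t) (imat_mult n Xi (imat_mult n Yi D))))"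
    unfolding imat_mult_add_right imat_mult_smult_right by (rule imat_cong_refl)
  also have "imat_cong n q \<dots> (imat_add imat_one (imat_smult (s * t) D))"
    by (rule imat_cong_add[OF YX XiYiD])
  finally show ?thesis unfolding D_def .
qed

lemma imat_mult_one_plus_quadratic:
  assumes "i < n" "j < n"
  shows "imat_mult n (imat_add imat_one (imat_smult s A))
      (\<lambda>i j. imat_one i j + x * A i j + y * imat_mult n A A i j) i j
    = imat_one i j + (x + s) * A i j + (y + s * x) * imat_mult n A A i j
      + s * y * imat_mult n A (imat_mult n A A) i j"
proof -
  have "imat_mult n (imat_add imat_one (imat_smult s A))
      (\<lambda>i j. imat_one i j + x * A i j + y * imat_mult n A A i j) i j
    = (\<Sum>l<n. imat_one i l * imat_one l j + x * (imat_one i l * A l j)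
        + y * (imat_one i l * imat_mult n A A l j) + s * (A i l * imat_one l j)
        + s * x * (A i l * A l j) + s * y * (A i l * imat_mult n A A l j))"
    unfolding imat_mult_def[of n "imat_add imat_one (imat_smult s A)"]
    by (rule sum.cong) (auto simp: algebra_simps)
  also have "\<dots> = (\<Sum>l<n. imat_one i l * imat_one l j) + x * (\<Sum>l<n. imat_one i l * A l j)
      + y * (\<Sum>l<n. imat_one i l * imat_mult n A A l j) + s * (\<Sum>l<n. A i l * imat_one l j)
      + s * x * (\<Sum>l<n. A i l * A l j) + s * y * (\<Sum>l<n. A i l * imat_mult n A A l j)"
    by (simp add: sum.distrib sum_distrib_left)
  also have "\<dots> = imat_one i j + (x + s) * A i j + (y + s * x) * imat_mult n A A i j
      + s * y * imat_mult n A (imat_mult n A A) i j"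
  proof -
    have "(\<Sum>l<n. A i l * A l j) = imat_mult n A A i j"
      and "(\<Sum>l<n. A i l * imat_mult n A A l j) = imat_mult n A (imat_mult n A A) i j"
      by (simp_all only: imat_mult_def)
    with assms show ?thesis
      by (simp only: imat_one_sum_left imat_one_sum_right) (simp add: algebra_simps)
  qed
  finally show ?thesis .
qed

lemma imat_pow_one_plus_cong:
  fixes s :: int
  shows "imat_cong n (s^3) (imat_pow n (imat_add imat_one (imat_smult s A)) e)
     (\<lambda>i j. imat_one i j + int e * s * A i j + int (e choose 2) * s^2 * imat_mult n A A i j)"
proof (induction e)
  case 0
  show ?case by (simp add: numeral_2_eq_2)
next
  case (Suc e)
  let ?X = "imat_add imat_one (imat_smult s A)"
  let ?x = "int e * s" and ?y = "int (e choose 2) * s^2"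
  have "imat_cong n (s^3) (imat_pow n ?X (Suc e))
      (imat_mult n ?X (\<lambda>i j. imat_one i j + ?x * A i j + ?y * imat_mult n A A i j))"
    unfolding imat_pow.simps by (rule imat_cong_mult[OF imat_cong_refl Suc.IH])
  moreover have "imat_cong n (s^3) (imat_mult n ?X (\<lambda>i j. imat_one i j + ?x * A i j + ?y * imat_mult n A A i j))
     (\<lambda>i j. imat_one i j + int (Suc e) * s * A i j + int (Suc e choose 2) * s^2 * imat_mult n A A i j)"
    unfolding imat_cong_def
  proof (intro allI impI)
    fix i j assume ij: "i < n" "j < n"
    have ch: "int (Suc e choose 2) = int (e choose 2) + int e"
      by (simp add: numeral_2_eq_2)
    have "imat_mult n ?X (\<lambda>i j. imat_one i j + ?x * A i j + ?y * imat_mult n A A i j) i j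
      = imat_one i j + int (Suc e) * s * A i j + int (Suc e choose 2) * s^2 * imat_mult n A A i j
        + s^3 * (int (e choose 2) * imat_mult n A (imat_mult n A A) i j)"
      unfolding imat_mult_one_plus_quadratic[OF ij] ch
      by (simp add: power2_eq_square power3_eq_cube algebra_simps)
    thus "[imat_mult n ?X (\<lambda>i j. imat_one i j + ?x * A i j + ?y * imat_mult n A A i j) i j =
        imat_one i j + int (Suc e) * s * A i j + int (Suc e choose 2) * s^2 * imat_mult n A A i j] (mod s^3)"
      by (simp add: cong_iff_dvd_diff)
  qed
  ultimately show ?case by (rule imat_cong_trans)
qed

lemma prime_dvd_choose_two:
  fixes p :: int
  assumes p: "prime p" "p > 2" and e: "p dvd int e"
  shows "p dvd int (e choose 2)"
proof -
  have "even (e * (e - 1))" by (cases e) auto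
  hence "2 * (e choose 2) = e * (e - 1)"
    unfolding choose_two by (rule dvd_mult_div_cancel)
  hence "2 * int (e choose 2) = int e * int (e - 1)" by (metis of_nat_mult of_nat_numeral)
  hence "p dvd 2 * int (e choose 2)" using e by simp
  moreover have "\<not> p dvd 2" using p(2) zdvd_imp_le by fastforce
  ultimately show ?thesis using p(1) by (simp add: prime_dvd_mult_iff)
qed

text \<open>For e \<equiv> pc (mod p^2) the binomial term (e choose 2) p^(2a) vanishes modulo p^(a+2)
  because p divides (e choose 2); this is where p > 2 is needed.\<close>

lemma imat_pow_one_plus_prime_power:
  fixes p c :: int
  assumes p: "prime p" "p > 2" and a: "a \<ge> 1" and e: "[int e = p * c] (mod p^2)"
  shows "imat_cong n (p^(a+2)) (imat_pow n (imat_add imat_one (imat_smult (p^a) A)) e)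
    (imat_add imat_one (imat_smult (p^(a+1) * c) A))"
proof -
  define s where "s = p^a"
  define q where "q = p^(a+2)"
  have q_dvd_cube: "q dvd s^3"
    unfolding s_def q_def power_mult[symmetric] by (rule le_imp_power_dvd) (use a in simp)
  have q_dvd_square: "q dvd p * s^2"
    unfolding s_def q_def power_mult[symmetric] power_Suc[symmetric] by (rule le_imp_power_dvd) (use a in simp)
  have "p dvd int e"
    using cong_dvd_modulus[OF e, of p]
    by (simp add: cong_iff_dvd_diff power2_eq_square) (metis dvd_add_left_iff diff_add_cancel dvd_triv_left)
  hence "p dvd int (e choose 2)" by (rule prime_dvd_choose_two[OF p])
  hence choose: "q dvd int (e choose 2) * s^2" using q_dvd_square by (meson dvd_trans mult_dvd_mono dvd_refl)
  have "s * p^2 dvd s * (int e - p * c)"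
    using e by (simp add: cong_iff_dvd_diff power2_eq_square)
  moreover have "s * p^2 = q" unfolding s_def q_def by (simp add: power_add power2_eq_square)
  moreover have "s * (int e - p * c) = int e * s - p^(a+1) * c"
    unfolding s_def by (simp add: algebra_simps)
  ultimately have linear: "[int e * s = p^(a+1) * c] (mod q)"
    by (simp add: cong_iff_dvd_diff)
  have "imat_cong n q (imat_pow n (imat_add imat_one (imat_smult s A)) e)
      (\<lambda>i j. imat_one i j + int e * s * A i j + int (e choose 2) * s^2 * imat_mult n A A i j)"
    by (rule imat_cong_dvd[OF imat_pow_one_plus_cong q_dvd_cube])
  also have "imat_cong n q \<dots> (imat_add imat_one (imat_smult (p^(a+1) * c) A))"
    unfolding imat_cong_def
  proof (intro allI impI)
    fix i j
    have "[imat_one i j + int e * s * A i j + int (e choose 2) * s^2 * imat_mult n A A i j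
        = imat_one i j + p^(a+1) * c * A i j + 0] (mod q)"
      using choose by (intro cong_add cong_refl cong_scalar_right linear) (simp add: cong_0_iff)
    thus "[imat_one i j + int e * s * A i j + int (e choose 2) * s^2 * imat_mult n A A i j
        = imat_one i j + p^(a+1) * c * A i j] (mod q)" by simp
  qed
  finally show ?thesis unfolding s_def q_def .
qed

text \<open>With X = 1 + p^a A and Y = 1 + p B, modulo p^(a+2) the power X^e is 1 + p^(a+1) c A and
  the commutator is 1 + p^(a+1) (AB - BA); their product being 1 forces c A + AB - BA \<equiv> 0 (mod p).\<close>

lemma imat_relation_first_order:
  fixes p c :: int and a e :: nat
  assumes p: "prime p" "p > 2" and a: "a \<ge> 1"
    and X: "imat_cong n (p^a) X imat_one" and Y: "imat_cong n p Y imat_one"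
    and Xi: "imat_cong n (p^(a+2)) (imat_mult n Xi X) imat_one"
    and Yi: "imat_cong n (p^(a+2)) (imat_mult n Yi Y) imat_one"
    and P: "imat_cong n (p^(a+2)) P (imat_pow n X e)"
    and e: "[int e = p * c] (mod p^2)"
    and rel: "imat_cong n (p^(a+2)) (imat_mult n P (imat_mult n Xi (imat_mult n Yi (imat_mult n X Y)))) imat_one"
  shows "imat_cong n p (imat_bracket n (imat_deviation p Y) (imat_deviation (p^a) X))
    (imat_smult c (imat_deviation (p^a) X))"
proof -
  define A where "A = imat_deviation (p^a) X"
  define B where "B = imat_deviation p Y"
  define D where "D = imat_bracket n A B"
  define q where "q = p^(a+2)"
  define P1 where "P1 = p^(a+1)"
  have p0: "p \<noteq> 0" using p by auto
  have XA: "imat_cong n 0 X (imat_add imat_one (imat_smult (p^a) A))"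
    unfolding A_def by (rule imat_one_plus_deviation[OF X])
  have YB: "imat_cong n 0 Y (imat_add imat_one (imat_smult p B))"
    unfolding B_def by (rule imat_one_plus_deviation[OF Y])
  have p_dvd: "p dvd p^a" "p dvd p^(a+2)" using a by (simp_all add: dvd_power)
  have Xi1: "imat_cong n p Xi imat_one"
    by (rule imat_inverse_cong_one[OF imat_cong_dvd[OF X p_dvd(1)] imat_cong_dvd[OF Xi p_dvd(2)]])
  have Yi1: "imat_cong n p Yi imat_one"
    by (rule imat_inverse_cong_one[OF Y imat_cong_dvd[OF Yi p_dvd(2)]])
  have "imat_cong n q (imat_mult n Xi (imat_mult n Yi (imat_mult n X Y)))
      (imat_add imat_one (imat_smult (p^a * p) (imat_bracket n A B)))"
    by (rule imat_commutator_one_plus[OF XA YB Xi[folded q_def] Xi1 Yi[folded q_def] Yi1])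
      (simp add: q_def power_add power2_eq_square)
  hence comm: "imat_cong n q (imat_mult n Xi (imat_mult n Yi (imat_mult n X Y))) (imat_add imat_one (imat_smult P1 D))"
    unfolding D_def P1_def by (simp add: mult.commute)
  have "imat_cong n q P (imat_pow n (imat_add imat_one (imat_smult (p^a) A)) e)"
    using imat_cong_trans[OF P[folded q_def] imat_cong_0D[OF imat_cong_pow[OF XA]]] .
  also have "imat_cong n q \<dots> (imat_add imat_one (imat_smult (P1 * c) A))"
    unfolding q_def P1_def by (rule imat_pow_one_plus_prime_power[OF p a e])
  finally have pow: "imat_cong n q P (imat_add imat_one (imat_smult (P1 * c) A))" .
  have one: "imat_cong n q (imat_mult n (imat_add imat_one (imat_smult (P1 * c) A)) (imat_add imat_one (imat_smult P1 D))) imat_one"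
    using imat_cong_trans[OF imat_cong_mult[OF imat_cong_sym[OF pow] imat_cong_sym[OF comm]] rel[folded q_def]] .
  have cAD: "[c * A i j + D i j = 0] (mod p)" if ij: "i < n" "j < n" for i j
  proof -
    have "q dvd P1 * P1" unfolding q_def P1_def power_add[symmetric] by (rule le_imp_power_dvd) (use a in simp)
    hence "q dvd (P1 * P1) * (c * imat_mult n A D i j)" by (rule dvd_mult2)
    moreover have "imat_one i j + P1 * D i j + P1 * c * A i j + P1 * c * P1 * imat_mult n A D i j
        - (imat_one i j + P1 * (c * A i j + D i j)) = (P1 * P1) * (c * imat_mult n A D i j)"
      by (simp add: algebra_simps)
    ultimately have expand: "[imat_one i j + P1 * D i j + P1 * c * A i j + P1 * c * P1 * imat_mult n A D i j
        = imat_one i j + P1 * (c * A i j + D i j)] (mod q)"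
      by (simp only: cong_iff_dvd_diff)
    have "[imat_one i j + P1 * D i j + P1 * c * A i j + P1 * c * P1 * imat_mult n A D i j = imat_one i j] (mod q)"
      using one[unfolded imat_cong_def, rule_format, OF ij] unfolding imat_mult_one_plus[OF ij] .
    from cong_trans[OF cong_sym[OF expand] this]
    have "[imat_one i j + P1 * (c * A i j + D i j) = imat_one i j + 0] (mod q)" by simp
    hence "q dvd P1 * (c * A i j + D i j)" by (simp only: cong_add_lcancel cong_0_iff)
    moreover have "q = P1 * p" unfolding q_def P1_def by simp
    ultimately have "P1 * p dvd P1 * (c * A i j + D i j)" by simp
    thus ?thesis unfolding P1_def using p0 by (simp add: cong_0_iff)
  qed
  have "[imat_mult n B A i j - imat_mult n A B i j = c * A i j] (mod p)" if "i < n" "j < n" for i j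
  proof -
    have eq: "imat_mult n B A i j - imat_mult n A B i j - c * A i j = - (c * A i j + D i j)"
      unfolding D_def by simp
    show ?thesis using cAD[OF that] unfolding cong_iff_dvd_diff eq dvd_minus_iff by simp
  qed
  hence "imat_cong n p (imat_bracket n B A) (imat_smult c A)"
    unfolding imat_cong_def by blast
  thus ?thesis unfolding A_def B_def .
qed


section \<open>p-adic matrices through their finite levels\<close>

definition zpmat_level :: "zpmat \<Rightarrow> nat \<Rightarrow> imat" where
  "zpmat_level X k = (\<lambda>i j. X i j k)"

definition zpmat_cong_one :: "int \<Rightarrow> nat \<Rightarrow> nat \<Rightarrow> zpmat \<Rightarrow> bool" where
  "zpmat_cong_one p n k X \<longleftrightarrow> imat_cong n (p^k) (zpmat_level X k) imat_one"

lemma padic_mod_power: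
  assumes "padic p a" "k \<le> k'"
  shows "a k' mod p^k = a k"
  using assms(2)
proof (induction k' rule: dec_induct)
  case base
  have "0 \<le> a k" "a k < p^k" using assms(1) unfolding padic_def by auto
  thus ?case by simp
next
  case (step k')
  have "p^k dvd p^k'" using step.hyps(1) by (rule le_imp_power_dvd)
  hence "a (Suc k') mod p^k = (a (Suc k') mod p^k') mod p^k" by (simp add: mod_mod_cancel)
  also have "a (Suc k') mod p^k' = a k'" using assms(1) unfolding padic_def by auto
  finally show ?case using step.IH by simp
qed

lemma padic_not_dvd:
  assumes "prime p" "padic p c" "c 1 \<noteq> 0" "k \<ge> 1"
  shows "\<not> p dvd c k"
  using padic_mod_power[OF assms(2,4)] assms(3) by auto

lemma zpmat_level_cong:
  assumes "zpmat p n X" "k \<le> k'"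
  shows "imat_cong n (p^k) (zpmat_level X k') (zpmat_level X k)"
  using assms padic_mod_power[of p _ k k'] padic_mod_power[of p _ k k]
  by (auto simp: zpmat_def imat_cong_def zpmat_level_def cong_def)

lemma zpmat_level_mat_mul:
  "imat_cong n (p^k) (zpmat_level (mat_mul p n X Y) k) (imat_mult n (zpmat_level X k) (zpmat_level Y k))"
  unfolding imat_cong_def zpmat_level_def mat_mul_def imat_mult_def cong_def by simp

lemma zpmat_level_mat_one: "imat_cong n (p^k) (zpmat_level (mat_one p n) k) imat_one"
  unfolding imat_cong_def zpmat_level_def mat_one_def imat_one_def cong_def by simp

lemma zpmat_level_mat_pow:
  "imat_cong n (p^k) (zpmat_level (mat_pow p n X e) k) (imat_pow n (zpmat_level X k) e)"
proof (induction e)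
  case 0
  show ?case by (simp add: zpmat_level_mat_one)
next
  case (Suc e)
  have "imat_cong n (p^k) (zpmat_level (mat_pow p n X (Suc e)) k)
      (imat_mult n (zpmat_level X k) (zpmat_level (mat_pow p n X e) k))"
    unfolding mat_pow.simps by (rule zpmat_level_mat_mul)
  also have "imat_cong n (p^k) \<dots> (imat_pow n (zpmat_level X k) (Suc e))"
    unfolding imat_pow.simps by (rule imat_cong_mult[OF imat_cong_refl Suc.IH])
  finally show ?case .
qed

lemma zpmat_eqI:
  assumes X: "zpmat p n X" and Y: "zpmat p n Y"
    and cong: "\<And>k. imat_cong n (p^k) (zpmat_level X k) (zpmat_level Y k)"
  shows "X = Y"
proof (intro ext)
  fix i j k
  show "X i j k = Y i j k"
  proof (cases "i < n \<and> j < n")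
    case True
    hence "padic p (X i j)" "padic p (Y i j)" using X Y unfolding zpmat_def by auto
    hence "0 \<le> X i j k" "X i j k < p^k" "0 \<le> Y i j k" "Y i j k < p^k" unfolding padic_def by auto
    moreover have "[X i j k = Y i j k] (mod p^k)"
      using cong[of k] True unfolding imat_cong_def zpmat_level_def by auto
    ultimately show ?thesis by (rule cong_less_imp_eq_int)
  next
    case False
    thus ?thesis using X Y unfolding zpmat_def by auto
  qed
qed

lemma zpmat_mat_one:
  assumes "p > 1"
  shows "zpmat p n (mat_one p n)"
proof -
  have "padic p (\<lambda>k. 1 mod p^k)"
    using assms by (auto simp: padic_def le_imp_power_dvd mod_mod_cancel)
  moreover have "padic p (\<lambda>k. 0)" using assms by (simp add: padic_def)
  ultimately have "padic p (\<lambda>k. if b then 1 mod p^k else 0)" for b by (cases b) simp_all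
  thus ?thesis unfolding zpmat_def mat_one_def by auto
qed

lemma GL1_mat_inv_mul:
  assumes "GL1 p n X"
  shows "mat_mul p n (mat_inv p n X) X = mat_one p n"
proof -
  obtain Y0 where Y0: "zpmat p n Y0" "mat_mul p n X Y0 = mat_one p n" "mat_mul p n Y0 X = mat_one p n"
    using assms unfolding GL1_def by blast
  have "Y = Y0" if Y: "zpmat p n Y" "mat_mul p n Y X = mat_one p n" for Y
  proof (rule zpmat_eqI[OF Y(1) Y0(1)])
    fix k
    let ?L = "\<lambda>M. zpmat_level M k"
    have XY0: "imat_cong n (p^k) imat_one (imat_mult n (?L X) (?L Y0))"
      using imat_cong_trans[OF imat_cong_sym[OF zpmat_level_mat_one] zpmat_level_mat_mul[of n p k X Y0, unfolded Y0(2)]] .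
    have YX: "imat_cong n (p^k) (imat_mult n (?L Y) (?L X)) imat_one"
      using imat_cong_trans[OF imat_cong_sym[OF zpmat_level_mat_mul[of n p k Y X, unfolded Y(2)]] zpmat_level_mat_one] .
    have "imat_cong n (p^k) (?L Y) (imat_mult n (?L Y) imat_one)"
      by (rule imat_cong_0D[OF imat_cong_sym[OF imat_mult_one_right]])
    also have "imat_cong n (p^k) \<dots> (imat_mult n (?L Y) (imat_mult n (?L X) (?L Y0)))"
      by (rule imat_cong_mult[OF imat_cong_refl XY0])
    also have "imat_mult n (?L Y) (imat_mult n (?L X) (?L Y0)) = imat_mult n (imat_mult n (?L Y) (?L X)) (?L Y0)"
      by (simp only: imat_mult_assoc)
    also have "imat_cong n (p^k) \<dots> (imat_mult n imat_one (?L Y0))"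
      by (rule imat_cong_mult[OF YX imat_cong_refl])
    also have "imat_cong n (p^k) \<dots> (?L Y0)" by (rule imat_cong_0D[OF imat_mult_one_left])
    finally show "imat_cong n (p^k) (?L Y) (?L Y0)" .
  qed
  hence "mat_inv p n X = Y0"
    unfolding mat_inv_def using Y0 by blast
  thus ?thesis using Y0 by simp
qed

lemma GL1_cong_one_1: "GL1 p n X \<Longrightarrow> zpmat_cong_one p n 1 X"
  unfolding GL1_def zpmat_cong_one_def imat_cong_def zpmat_level_def mat_one_def imat_one_def
  by (auto simp: cong_def)

lemma zpmat_cong_one_level:
  assumes "zpmat p n X" "zpmat_cong_one p n k X" "k \<le> k'"
  shows "imat_cong n (p^k) (zpmat_level X k') imat_one"
  using imat_cong_trans[OF zpmat_level_cong[OF assms(1,3)]] assms(2)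
  unfolding zpmat_cong_one_def .

lemma zpmat_eq_mat_one:
  assumes "p > 1" "zpmat p n X" "\<And>k. zpmat_cong_one p n k X"
  shows "X = mat_one p n"
  using assms imat_cong_trans[OF _ imat_cong_sym[OF zpmat_level_mat_one]]
  by (intro zpmat_eqI[OF assms(2) zpmat_mat_one]) (auto simp: zpmat_cong_one_def)

section \<open>The relation in GL_n^(1)(Z_p)\<close>

lemma GL1_level_inv_mult:
  assumes "GL1 p n X"
  shows "imat_cong n (p^k) (imat_mult n (zpmat_level (mat_inv p n X) k) (zpmat_level X k)) imat_one"
  using imat_cong_sym[OF zpmat_level_mat_mul[of n p k "mat_inv p n X" X]] zpmat_level_mat_one[of n p k]
  unfolding GL1_mat_inv_mul[OF assms] by (rule imat_cong_trans)

lemma GL1_relation_level: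
  fixes p :: int and a :: nat and c :: "nat \<Rightarrow> int"
  assumes p: "prime p" "p > 2" and a: "a \<ge> 1"
    and X: "GL1 p n X" and Y: "GL1 p n Y"
    and rel: "mat_mul p n (mat_zpow p n X (padic_times_p p c)) (mat_comm p n X Y) = mat_one p n"
    and Xa: "zpmat_cong_one p n a X"
  shows "imat_cong n p
    (imat_bracket n (imat_deviation p (zpmat_level Y (a+2))) (imat_deviation (p^a) (zpmat_level X (a+2))))
    (imat_smult (c (a+2)) (imat_deviation (p^a) (zpmat_level X (a+2))))"
proof -
  let ?L = "\<lambda>M. zpmat_level M (a+2)"
  let ?P = "mat_zpow p n X (padic_times_p p c)"
  define e where "e = nat ((p * c (a+2)) mod p^(a+2))"
  have zX: "zpmat p n X" and zY: "zpmat p n Y" using X Y unfolding GL1_def by auto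
  have XK: "imat_cong n (p^a) (?L X) imat_one"
    using zpmat_cong_one_level[OF zX Xa] by simp
  have YK: "imat_cong n p (?L Y) imat_one"
    using zpmat_cong_one_level[OF zY GL1_cong_one_1[OF Y], of "a+2"] by simp
  have "?L ?P = zpmat_level (mat_pow p n X e) (a+2)"
    unfolding zpmat_level_def mat_zpow_def padic_times_p_def e_def by simp
  hence P: "imat_cong n (p^(a+2)) (?L ?P) (imat_pow n (?L X) e)"
    by (metis zpmat_level_mat_pow)
  have "[int e = p * c (a+2)] (mod p^(a+2))" unfolding e_def using p by (simp add: cong_def)
  moreover have "p^2 dvd p^(a+2)" by (rule le_imp_power_dvd) simp
  ultimately have e: "[int e = p * c (a+2)] (mod p^2)" by (rule cong_dvd_modulus)
  have "imat_cong n (p^(a+2)) (imat_mult n (?L ?P) (imat_mult n (?L (mat_inv p n X))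
      (imat_mult n (?L (mat_inv p n Y)) (imat_mult n (?L X) (?L Y))))) (?L (mat_mul p n ?P (mat_comm p n X Y)))"
    unfolding mat_comm_def
    by (intro imat_cong_sym[OF imat_cong_trans[OF zpmat_level_mat_mul]] imat_cong_mult[OF imat_cong_refl]
        imat_cong_trans[OF zpmat_level_mat_mul] zpmat_level_mat_mul)
  also have "imat_cong n (p^(a+2)) \<dots> imat_one" unfolding rel by (rule zpmat_level_mat_one)
  finally show ?thesis
    by (rule imat_relation_first_order[OF p a XK YK GL1_level_inv_mult[OF X] GL1_level_inv_mult[OF Y] P e])
qed

lemma GL1_relation_lift:
  fixes p :: int and a :: nat and c :: "nat \<Rightarrow> int"
  assumes p: "prime p" "p > 2" and a: "a \<ge> 1"
    and X: "GL1 p n X" and Y: "GL1 p n Y"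
    and c: "padic p c" "c 1 \<noteq> 0"
    and rel: "mat_mul p n (mat_zpow p n X (padic_times_p p c)) (mat_comm p n X Y) = mat_one p n"
    and Y2: "zpmat_cong_one p n 2 Y" and Xa: "zpmat_cong_one p n a X"
  shows "zpmat_cong_one p n (a + 1) X"
proof -
  have zX: "zpmat p n X" and zY: "zpmat p n Y" using X Y unfolding GL1_def by auto
  define A where "A = imat_deviation (p^a) (zpmat_level X (a+2))"
  define B where "B = imat_deviation p (zpmat_level Y (a+2))"
  have XA: "imat_cong n (p^a) (zpmat_level X (a+2)) imat_one"
    using zpmat_cong_one_level[OF zX Xa] by simp
  have Y1: "imat_cong n p (zpmat_level Y (a+2)) imat_one"
    using zpmat_cong_one_level[OF zY GL1_cong_one_1[OF Y], of "a + 2"] by simp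
  have "imat_cong n (p * p) (zpmat_level Y (a+2)) imat_one"
    using zpmat_cong_one_level[OF zY Y2, of "a + 2"] by (simp add: power2_eq_square)
  hence "imat_cong n p B imat_zero"
    unfolding B_def imat_deviation_cong_zero_iff[OF Y1] .
  from imat_cong_diff[OF imat_cong_mult[OF this imat_cong_refl, of A] imat_cong_mult[OF imat_cong_refl this, of A]]
  have "imat_cong n p (imat_bracket n B A) imat_zero"
    unfolding imat_mult_zero_left imat_mult_zero_right by (simp add: imat_zero_def)
  hence "imat_cong n p (imat_smult (c (a+2)) A) imat_zero"
    using GL1_relation_level[OF p a X Y rel Xa] unfolding A_def B_def
    by (meson imat_cong_sym imat_cong_trans)
  moreover have "\<not> p dvd c (a+2)" by (rule padic_not_dvd[OF p(1) c]) simp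
  ultimately have "imat_cong n p A imat_zero" using imat_cong_smult_cancel[OF p(1)] by blast
  hence "imat_cong n (p^(a+1)) (zpmat_level X (a+2)) imat_one"
    unfolding A_def imat_deviation_cong_zero_iff[OF XA] by (simp add: mult.commute)
  thus ?thesis
    unfolding zpmat_cong_one_def
    using imat_cong_trans[OF imat_cong_sym[OF zpmat_level_cong[OF zX, of "a + 1" "a + 2"]]] by simp
qed

lemma GL1_relation_eq_mat_one:
  fixes p :: int and c :: "nat \<Rightarrow> int"
  assumes p: "prime p" "p > 2"
    and X: "GL1 p n X" and Y: "GL1 p n Y"
    and c: "padic p c" "c 1 \<noteq> 0"
    and rel: "mat_mul p n (mat_zpow p n X (padic_times_p p c)) (mat_comm p n X Y) = mat_one p n"
    and Y2: "zpmat_cong_one p n 2 Y"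
  shows "X = mat_one p n"
proof (rule zpmat_eq_mat_one)
  fix k
  show "zpmat_cong_one p n k X"
  proof (induction k)
    case 0
    show ?case by (simp add: zpmat_cong_one_def imat_cong_def)
  next
    case (Suc k)
    show ?case
      using GL1_relation_lift[OF p _ X Y c rel Y2 Suc.IH] GL1_cong_one_1[OF X]
      by (cases "k = 0") auto
  qed
qed (use p X in \<open>auto simp: GL1_def\<close>)

lemma zpmat_cong_one_2_of_deviation:
  assumes "GL1 p n X" "imat_cong n p (imat_deviation p (zpmat_level X 3)) imat_zero"
  shows "zpmat_cong_one p n 2 X"
proof -
  have zX: "zpmat p n X" using assms(1) unfolding GL1_def by blast
  have "imat_cong n p (zpmat_level X 3) imat_one"
    using zpmat_cong_one_level[OF zX GL1_cong_one_1[OF assms(1)], of 3] by simp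
  with assms(2) have "imat_cong n (p^2) (zpmat_level X 3) imat_one"
    by (simp add: imat_deviation_cong_zero_iff power2_eq_square)
  thus ?thesis
    unfolding zpmat_cong_one_def
    using imat_cong_trans[OF imat_cong_sym[OF zpmat_level_cong[OF zX, of 2 3]]] by simp
qed

theorem theorem1p9:
  fixes p :: int and m n :: nat
    and c :: "nat \<Rightarrow> nat \<Rightarrow> int"
    and X :: "nat \<Rightarrow> zpmat"
  assumes "prime p" and "p > 2" and "m \<ge> 2"
    and "\<forall>i\<in>{1..2*m}. padic p (c i) \<and> c i 1 \<noteq> 0"
    and "int n < p"
    and "\<forall>i\<in>{1..2*m}. GL1 p n (X i)"
    and "\<forall>i\<in>{1..2*m}.
           mat_mul p n (mat_zpow p n (X i) (padic_times_p p (c i)))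
             (mat_comm p n (X i) (X (if i = 2*m then 1 else Suc i))) = mat_one p n"
  shows "\<forall>i\<in>{1..2*m}. X i = mat_one p n"
proof -
  note p = assms(1,2) and c = assms(4) and np = assms(5) and G = assms(6) and rel = assms(7)
  define nx where "nx j = (if j = 2*m then 1 else Suc j)" for j :: nat
  define A where "A j = imat_deviation p (zpmat_level (X j) 3)" for j
  have nx: "nx j \<in> {1..2*m}" if "j \<in> {1..2*m}" for j
    using that unfolding nx_def by auto
  have bracket: "imat_cong n p (imat_bracket n (A (nx j)) (A j)) (imat_smult (c j 3) (A j))"
    and unit: "\<not> p dvd c j 3" if "j \<in> {1..2*m}" for j
    using GL1_relation_level[OF p order.refl G[rule_format, OF that] G[rule_format, OF nx[OF that]]
        rel[rule_format, OF that, folded nx_def] GL1_cong_one_1[OF G[rule_format, OF that]]]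
      padic_not_dvd[OF p(1), of "c j" 3] c that
    by (simp_all add: A_def numeral_3_eq_3)
  have "zpmat_cong_one p n 2 (X j)" if "j \<in> {1..2*m}" for j
    using imat_bracket_chain_cong_zero[OF p(1) np unit[OF that] unit[OF nx[OF that]]
        bracket[OF that] bracket[OF nx[OF that]]]
    by (intro zpmat_cong_one_2_of_deviation[OF G[rule_format, OF that]]) (simp add: A_def)
  thus ?thesis
    using GL1_relation_eq_mat_one[OF p G[rule_format] G[rule_format, OF nx] _ _ rel[rule_format, folded nx_def]] c nx
    by blast
qed

end
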